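(* For $i\geq 1$ let $\mathcal B_i$ be the (non-unital) $*$-algebra generated by $A_i$ and $A_i^\dagger$, i.e. the set of non-commutative polynomials without constant term in $A_i,A_i^\dagger$. Let $\mathcal B$ be the algebra of all bounded operators on $\mathfrak F_{WM}(\mathcal H)$ and $\omega_\Omega(X)=\langle\Omega,X\Omega\rangle$ the vacuum state. Then the algebras $\{\mathcal B_i\}_{i\ge1}$ are monotone independent in $(\mathcal B,\omega_\Omega)$, namely: (M1) if $i<j>k$ are indices and $p_i\in\mathcal B_i$, $p_j\in\mathcal B_j$, $p_k\in\mathcal B_k$, then $p_ip_jp_k=\omega_\Omega(p_j)\,p_ip_k$; (M2) if $j_1>j_2>\cdots>j_k<j_{k+1}<\cdots<j_n$ and $p_{j_m}\in\mathcal B_{j_m}$ for $m=1,\dots,n$, then $\omega_\Omega(p_{j_1}\cdots p_{j_n})=\prod_{m=1}^n\omega_\Omega(p_{j_m})$.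
   Context: Let $\mathcal H$ be a separable Hilbert space with a fixed orthonormal basis $\{e_i: i\geq 1\}$, and $\mathfrak F(\mathcal H)=\bigoplus_{n\ge 0}\mathcal H^{\otimes n}$ its full Fock space with vacuum vector $\Omega$. The weakly monotone Fock space $\mathfrak F_{WM}(\mathcal H)$ is the closed subspace of $\mathfrak F(\mathcal H)$ spanned by $\Omega$ and all simple tensors $e_{i_k}\otimes e_{i_{k-1}}\otimes\cdots\otimes e_{i_1}$ with $k\geq 1$ and $i_k\geq i_{k-1}\geq\cdots\geq i_1$. For $i\geq1$ the weakly monotone annihilation operator $A_i$ and creation operator $A_i^\dagger$ are the bounded operators on $\mathfrak F_{WM}(\mathcal H)$ defined on this spanning set by $A_i\Omega=0$, $A_i(e_{i_k}\otimes\cdots\otimes e_{i_1})=\delta_{i,i_k}\, e_{i_{k-1}}\otimes\cdots\otimes e_{i_1}$ (interpreted as $\delta_{i,i_1}\Omega$ when $k=1$), $A_i^\dagger\Omega=e_i$, and $A_i^\dagger(e_{i_k}\otimes\cdots\otimes e_{i_1})=e_i\otimes e_{i_k}\otimes\cdots\otimes e_{i_1}$ if $i\geq i_k$ and $=0$ if $i<i_k$. They are mutually adjoint, of norm one. *)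

theory Defs
  imports Complex_Main
begin

text \<open>Basis of the weakly monotone Fock space: lists [i_k, ..., i_1] with
  i_k \<ge> ... \<ge> i_1 \<ge> 1 (head = leftmost tensor factor); [] is the vacuum.\<close>

type_synonym vec = "nat list \<Rightarrow> complex"
type_synonym op = "vec \<Rightarrow> vec"

definition wm_valid :: "nat list \<Rightarrow> bool" where
  "wm_valid w \<longleftrightarrow> sorted_wrt (\<ge>) w \<and> (\<forall>x\<in>set w. 1 \<le> x)"

text \<open>Algebraic (finitely supported) weakly monotone Fock space: dense in F_WM.\<close>
definition fock0 :: "vec set" where
  "fock0 = {f. finite {w. f w \<noteq> 0} \<and> (\<forall>w. f w \<noteq> 0 \<longrightarrow> wm_valid w)}"

definition vacuum :: vec where
  "vacuum = (\<lambda>w. if w = [] then 1 else 0)"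

text \<open>Annihilation: A_i e_{i # w} = e_w, A_i e_v = 0 otherwise.\<close>
definition ann :: "nat \<Rightarrow> op" where
  "ann i f = (\<lambda>w. if wm_valid w \<and> wm_valid (i # w) then f (i # w) else 0)"

text \<open>Creation: A_i^dagger e_w = e_{i # w} if i \<ge> head w, 0 otherwise.\<close>
definition cre :: "nat \<Rightarrow> op" where
  "cre i f = (\<lambda>v. if wm_valid v \<and> v \<noteq> [] \<and> hd v = i then f (tl v) else 0)"

definition omega :: "op \<Rightarrow> complex" where
  "omega X = X vacuum []"

inductive_set alg :: "nat \<Rightarrow> op set" for i :: nat where
  gen_ann: "ann i \<in> alg i"
| gen_cre: "cre i \<in> alg i"
| add: "p \<in> alg i \<Longrightarrow> q \<in> alg i \<Longrightarrow> (\<lambda>f w. p f w + q f w) \<in> alg i"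
| smult: "p \<in> alg i \<Longrightarrow> (\<lambda>f w. c * p f w) \<in> alg i"
| mult: "p \<in> alg i \<Longrightarrow> q \<in> alg i \<Longrightarrow> p \<circ> q \<in> alg i"

end

theory Submission
  imports Defs
begin

text \<open>For fixed \<open>j\<close>, a basis word whose letters are all at most \<open>j\<close> is uniquely \<open>j\<^sup>n @ w\<close>
  with the letters of \<open>w\<close> below \<open>j\<close>, and \<open>A\<^sub>j\<close>, \<open>A\<^sub>j\<^sup>\<dagger>\<close> only change \<open>n\<close>. So an element \<open>p\<close> of
  \<open>B\<^sub>j\<close> acts on such vectors through a map on sequences indexed by \<open>n\<close>, and for \<open>g\<close> supported
  below \<open>j\<close> we get \<open>p g = \<Sum>\<^sub>n d\<^sub>n e\<^sub>j\<^sup>n \<otimes> g\<close> with \<open>d\<^sub>0 = \<omega>(p)\<close>. The terms with \<open>n > 0\<close> begin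
  with the letter \<open>j\<close> and are killed by every element of \<open>B\<^sub>i\<close> with \<open>i < j\<close>; this is (M1).
  For (M2) the vacuum is pushed through the increasing part of the product by (M1), and
  the decreasing part is peeled off from the left using \<open>\<langle>\<Omega>, p g\<rangle> = \<omega>(p) \<langle>\<Omega>, g\<rangle>\<close> for \<open>g\<close>
  supported below \<open>j\<close>.\<close>

definition supported_below :: "nat \<Rightarrow> vec \<Rightarrow> bool" where
  "supported_below j g \<longleftrightarrow> (\<forall>v. g v \<noteq> 0 \<longrightarrow> wm_valid v \<and> (v = [] \<or> hd v < j))"

text \<open>The coefficient of \<open>stack j G\<close> at the word \<open>j\<^sup>n @ w\<close>, with all letters of \<open>w\<close>
  below \<open>j\<close>, is \<open>G n w\<close>; it vanishes on all other words.\<close>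

definition stack :: "nat \<Rightarrow> (nat \<Rightarrow> nat list \<Rightarrow> complex) \<Rightarrow> vec" where
  "stack j G v = (if wm_valid v \<and> (dropWhile (\<lambda>x. x = j) v = [] \<or> hd (dropWhile (\<lambda>x. x = j) v) < j)
     then G (length (takeWhile (\<lambda>x. x = j) v)) (dropWhile (\<lambda>x. x = j) v) else 0)"

lemma wm_valid_Nil [simp]: "wm_valid []"
  by (simp add: wm_valid_def)

lemma wm_valid_Cons: "wm_valid (x # v) \<longleftrightarrow> wm_valid v \<and> 1 \<le> x \<and> (\<forall>y\<in>set v. y \<le> x)"
  by (auto simp: wm_valid_def)

lemma supported_below_mono: "supported_below i g \<Longrightarrow> i \<le> j \<Longrightarrow> supported_below j g"
  by (fastforce simp: supported_below_def)

lemma supported_below_vacuum: "supported_below j vacuum"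
  by (simp add: supported_below_def vacuum_def)

lemma stack_letters_le:
  assumes "wm_valid v" "dropWhile (\<lambda>x. x = j) v = [] \<or> hd (dropWhile (\<lambda>x. x = j) v) < j"
  shows "\<forall>y\<in>set v. y \<le> j"
proof (cases v)
  case (Cons x u)
  with assms have "x \<le> j" by (cases "x = j") auto
  with assms(1) Cons show ?thesis by (auto simp: wm_valid_Cons)
qed simp

lemma ann_stack:
  assumes "1 \<le> j"
  shows "ann j (stack j G) = stack j (\<lambda>n. G (Suc n))"
proof
  fix v
  show "ann j (stack j G) v = stack j (\<lambda>n. G (Suc n)) v"
  proof (cases "wm_valid v \<and> (dropWhile (\<lambda>x. x = j) v = [] \<or> hd (dropWhile (\<lambda>x. x = j) v) < j)")
    case True
    with stack_letters_le[of v j] assms have "wm_valid (j # v)" by (auto simp: wm_valid_Cons)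
    with True show ?thesis by (simp add: ann_def stack_def)
  qed (auto simp: ann_def stack_def wm_valid_Cons)
qed

lemma cre_stack: "cre j (stack j G) = stack j (\<lambda>n w. if n = 0 then 0 else G (n - 1) w)"
proof
  fix v
  show "cre j (stack j G) v = stack j (\<lambda>n w. if n = 0 then 0 else G (n - 1) w) v"
    by (cases v) (auto simp: cre_def stack_def wm_valid_Cons)
qed

lemma stack_add: "(\<lambda>v. stack j G v + stack j H v) = stack j (\<lambda>n w. G n w + H n w)"
  by (auto simp: stack_def fun_eq_iff)

lemma stack_scale: "(\<lambda>v. c * stack j G v) = stack j (\<lambda>n w. c * G n w)"
  by (auto simp: stack_def fun_eq_iff)

lemma stack_level_zero:
  assumes "supported_below j g"
  shows "stack j (\<lambda>n w. if n = 0 then g w else 0) = g"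
proof
  fix v
  show "stack j (\<lambda>n w. if n = 0 then g w else 0) v = g v"
    using assms by (cases v) (auto simp: stack_def supported_below_def)
qed

text \<open>Only homogeneity of the sequence map \<open>P\<close> is recorded: it is all that is needed
  to pull the coefficient \<open>g w\<close> out in \<open>alg_apply_supported_below\<close>.\<close>

lemma alg_acts_on_levels:
  assumes "p \<in> alg j" "1 \<le> j"
  shows "\<exists>P. (\<forall>c a. P (\<lambda>m. c * a m) = (\<lambda>n. c * P a n)) \<and>
             (\<forall>G. p (stack j G) = stack j (\<lambda>n w. P (\<lambda>m. G m w) n))"
  using assms(1)
proof induction
  case gen_ann
  show ?case
    using ann_stack[OF assms(2)] by (intro exI[of _ "\<lambda>a n. a (Suc n)"]) auto
next
  case gen_cre
  show ?case
    by (rule exI[of _ "\<lambda>a n. if n = 0 then 0 else a (n - 1)"]) (auto simp: cre_stack)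
next
  case (add p q)
  then obtain P Q where "\<forall>c a. P (\<lambda>m. c * a m) = (\<lambda>n. c * P a n)"
     "\<forall>G. p (stack j G) = stack j (\<lambda>n w. P (\<lambda>m. G m w) n)"
     "\<forall>c a. Q (\<lambda>m. c * a m) = (\<lambda>n. c * Q a n)"
     "\<forall>G. q (stack j G) = stack j (\<lambda>n w. Q (\<lambda>m. G m w) n)" by blast
  then show ?case
    by (intro exI[of _ "\<lambda>a n. P a n + Q a n"]) (auto simp: stack_add distrib_left)
next
  case (smult p c)
  then obtain P where "\<forall>c a. P (\<lambda>m. c * a m) = (\<lambda>n. c * P a n)"
     "\<forall>G. p (stack j G) = stack j (\<lambda>n w. P (\<lambda>m. G m w) n)" by blast
  then show ?case
    by (intro exI[of _ "\<lambda>a n. c * P a n"]) (auto simp: stack_scale mult.left_commute)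
next
  case (mult p q)
  then obtain P Q where "\<forall>c a. P (\<lambda>m. c * a m) = (\<lambda>n. c * P a n)"
     "\<forall>G. p (stack j G) = stack j (\<lambda>n w. P (\<lambda>m. G m w) n)"
     "\<forall>c a. Q (\<lambda>m. c * a m) = (\<lambda>n. c * Q a n)"
     "\<forall>G. q (stack j G) = stack j (\<lambda>n w. Q (\<lambda>m. G m w) n)" by blast
  then show ?case
    by (intro exI[of _ "\<lambda>a. P (Q a)"]) auto
qed

lemma alg_scale: "p \<in> alg i \<Longrightarrow> p (\<lambda>w. c * f w) = (\<lambda>w. c * p f w)"
proof (induction arbitrary: c f rule: alg.induct)
  case (add p q)
  then show ?case by (simp add: distrib_left)
next
  case (smult p d)
  then show ?case by (simp add: mult.left_commute)
qed (auto simp: ann_def cre_def)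

lemma alg_add: "p \<in> alg i \<Longrightarrow> p (\<lambda>w. f w + g w) = (\<lambda>w. p f w + p g w)"
proof (induction arbitrary: f g rule: alg.induct)
  case (add p q)
  then show ?case by (simp add: algebra_simps)
next
  case (smult p d)
  then show ?case by (simp add: distrib_left)
qed (auto simp: ann_def cre_def)

lemma alg_zero: "p \<in> alg i \<Longrightarrow> p (\<lambda>w. 0) = (\<lambda>w. 0)"
  using alg_scale[of p i 0 "\<lambda>w. 0"] by simp

lemma alg_supported_below: "p \<in> alg k \<Longrightarrow> supported_below (Suc k) (p f)"
  unfolding supported_below_def
proof (induction arbitrary: f rule: alg.induct)
  case gen_ann
  show ?case
  proof (intro allI impI)
    fix v assume "ann k f v \<noteq> 0"
    then show "wm_valid v \<and> (v = [] \<or> hd v < Suc k)"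
      by (cases v) (auto simp: ann_def wm_valid_Cons split: if_splits)
  qed
next
  case gen_cre
  show ?case by (auto simp: cre_def)
next
  case (add p q)
  then show ?case by (metis add.right_neutral)
next
  case (smult p c)
  then show ?case by (metis mult_zero_right)
next
  case (mult p q)
  then show ?case by fastforce
qed

lemma alg_annihilates_above:
  "p \<in> alg i \<Longrightarrow> \<forall>v. h v \<noteq> 0 \<longrightarrow> v \<noteq> [] \<and> i < hd v \<Longrightarrow> p h = (\<lambda>w. 0)"
proof (induction arbitrary: h rule: alg.induct)
  case gen_ann
  then show ?case by (fastforce simp: ann_def)
next
  case gen_cre
  show ?case
  proof
    fix v
    show "cre i h v = 0"
    proof (cases "wm_valid v \<and> v \<noteq> [] \<and> hd v = i")
      case True
      then obtain u where u: "v = i # u" "wm_valid (i # u)" by (cases v) auto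
      have "h u = 0"
      proof (rule ccontr)
        assume "h u \<noteq> 0"
        with gen_cre have "u \<noteq> [] \<and> i < hd u" by blast
        with u(2) show False by (cases u) (auto simp: wm_valid_Cons)
      qed
      with u show ?thesis by (simp add: cre_def)
    qed (auto simp: cre_def)
  qed
qed (simp_all add: alg_zero)

lemma alg_apply_supported_below:
  assumes "p \<in> alg j" "1 \<le> j" "supported_below j g"
  shows "\<exists>d. d 0 = omega p \<and> p g = stack j (\<lambda>n w. g w * d n)"
proof -
  obtain P where P: "\<forall>c a. P (\<lambda>m. c * a m) = (\<lambda>n. c * P a n)"
     "\<forall>G. p (stack j G) = stack j (\<lambda>n w. P (\<lambda>m. G m w) n)"
    using alg_acts_on_levels[OF assms(1,2)] by blast
  define \<delta> where "\<delta> = (\<lambda>m::nat. if m = 0 then (1::complex) else 0)"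
  have apply_below: "p f = stack j (\<lambda>n w. f w * P \<delta> n)" if "supported_below j f" for f
  proof -
    have "p f = p (stack j (\<lambda>n w. if n = 0 then f w else 0))"
      using stack_level_zero[OF that] by simp
    also have "\<dots> = stack j (\<lambda>n w. P (\<lambda>m. f w * \<delta> m) n)"
      using P(2) by (simp add: \<delta>_def if_distrib cong: if_cong)
    also have "\<dots> = stack j (\<lambda>n w. f w * P \<delta> n)"
      using P(1) by simp
    finally show ?thesis .
  qed
  have "omega p = P \<delta> 0"
    unfolding omega_def apply_below[OF supported_below_vacuum] by (simp add: stack_def vacuum_def)
  with apply_below[OF assms(3)] show ?thesis by auto
qed

lemma alg_apply_vacuum_coeff:
  assumes "p \<in> alg j" "1 \<le> j" "supported_below j g"
  shows "p g [] = omega p * g []"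
  using alg_apply_supported_below[OF assms] by (auto simp: stack_def)

lemma alg_factor_omega:
  assumes "p \<in> alg i" "q \<in> alg j" "1 \<le> i" "i < j" "supported_below j g"
  shows "p (q g) = (\<lambda>w. omega q * p g w)"
proof -
  obtain d where d: "d 0 = omega q" "q g = stack j (\<lambda>n w. g w * d n)"
    using alg_apply_supported_below[OF assms(2) _ assms(5)] assms(3,4) by auto
  define r where "r = stack j (\<lambda>n w. if n = 0 then 0 else g w * d n)"
  have level_zero: "(\<lambda>v. omega q * g v) = stack j (\<lambda>n w. omega q * (if n = 0 then g w else 0))"
    using stack_scale[of "omega q" j "\<lambda>n w. if n = 0 then g w else 0"]
    unfolding stack_level_zero[OF assms(5)] .
  have "q g = stack j (\<lambda>n w. omega q * (if n = 0 then g w else 0) + (if n = 0 then 0 else g w * d n))"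
    unfolding d(2) by (rule arg_cong[where f = "stack j"]) (simp add: fun_eq_iff d(1))
  also have "\<dots> = (\<lambda>v. omega q * g v + r v)"
    by (simp only: r_def stack_add[symmetric] level_zero[symmetric])
  finally have "q g = (\<lambda>v. omega q * g v + r v)" .
  moreover have "p r = (\<lambda>w. 0)"
  proof (rule alg_annihilates_above[OF assms(1)], intro allI impI)
    fix v assume "r v \<noteq> 0"
    then have "takeWhile (\<lambda>x. x = j) v \<noteq> []"
      by (auto simp: r_def stack_def split: if_splits)
    with assms(4) show "v \<noteq> [] \<and> i < hd v" by (cases v) (auto split: if_splits)
  qed
  ultimately show ?thesis
    using alg_add[OF assms(1)] alg_scale[OF assms(1)] by simp
qed

lemma foldr_comp_Cons_apply: "foldr (\<circ>) (p # ps) id f = p (foldr (\<circ>) ps id f)"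
  by simp

lemma foldr_increasing_apply_vacuum:
  assumes "list_all2 (\<lambda>p j. 1 \<le> j \<and> p \<in> alg j) (p # ps) (j # js)" "sorted_wrt (<) (j # js)"
  shows "foldr (\<circ>) (p # ps) id vacuum = (\<lambda>w. (\<Prod>q\<leftarrow>ps. omega q) * p vacuum w)"
  using assms
proof (induction ps arbitrary: p j js)
  case Nil
  then show ?case by simp
next
  case (Cons p' ps)
  obtain j' js' where js: "js = j' # js'"
    using Cons.prems(1) by (cases js) auto
  have p: "1 \<le> j" "p \<in> alg j" and p': "p' \<in> alg j'" "j < j'"
    using Cons.prems js by auto
  have IH: "foldr (\<circ>) (p' # ps) id vacuum = (\<lambda>w. (\<Prod>q\<leftarrow>ps. omega q) * p' vacuum w)"
  proof (rule Cons.IH[of p' j' js'])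
    show "list_all2 (\<lambda>p j. 1 \<le> j \<and> p \<in> alg j) (p' # ps) (j' # js')"
      "sorted_wrt (<) (j' # js')"
      using Cons.prems js by auto
  qed
  have "foldr (\<circ>) (p # p' # ps) id vacuum = p (foldr (\<circ>) (p' # ps) id vacuum)"
    unfolding foldr_comp_Cons_apply ..
  also have "\<dots> = p (\<lambda>w. (\<Prod>q\<leftarrow>ps. omega q) * p' vacuum w)"
    unfolding IH ..
  also have "\<dots> = (\<lambda>w. (\<Prod>q\<leftarrow>ps. omega q) * p (p' vacuum) w)"
    using alg_scale[OF p(2)] by simp
  also have "\<dots> = (\<lambda>w. (\<Prod>q\<leftarrow>ps. omega q) * (omega p' * p vacuum w))"
    using alg_factor_omega[OF p(2) p'(1) p(1) p'(2) supported_below_vacuum] by simp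
  also have "\<dots> = (\<lambda>w. (\<Prod>q\<leftarrow>p' # ps. omega q) * p vacuum w)"
    by (simp add: mult_ac)
  finally show ?case .
qed

lemma omega_foldr_valley:
  assumes "list_all2 (\<lambda>p j. 1 \<le> j \<and> p \<in> alg j) ps js" "k < length js"
    "sorted_wrt (>) (take (Suc k) js)" "sorted_wrt (<) (drop k js)"
  shows "omega (foldr (\<circ>) ps id) = (\<Prod>p\<leftarrow>ps. omega p)"
  using assms
proof (induction k arbitrary: ps js)
  case 0
  then obtain p ps' j js' where ps: "ps = p # ps'" and js: "js = j # js'"
    by (cases ps; cases js) auto
  have increasing: "list_all2 (\<lambda>p j. 1 \<le> j \<and> p \<in> alg j) (p # ps') (j # js')"
    "sorted_wrt (<) (j # js')"
    using 0 ps js by simp_all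
  have "omega (foldr (\<circ>) ps id) = foldr (\<circ>) (p # ps') id vacuum []"
    unfolding omega_def ps ..
  also have "\<dots> = (\<Prod>q\<leftarrow>ps'. omega q) * omega p"
    unfolding foldr_increasing_apply_vacuum[OF increasing] omega_def[of p] by simp
  also have "\<dots> = (\<Prod>q\<leftarrow>ps. omega q)"
    unfolding ps by (simp add: mult.commute)
  finally show ?case .
next
  case (Suc k)
  then obtain p ps' j j' js' where ps: "ps = p # ps'" and js: "js = j # j' # js'"
    by (cases ps; cases js; cases "tl js") auto
  have p: "1 \<le> j" "p \<in> alg j" and j': "j' < j"
    using Suc.prems ps js by auto
  have tail: "list_all2 (\<lambda>p j. 1 \<le> j \<and> p \<in> alg j) ps' (j' # js')"
    using Suc.prems(1) ps js by simp
  then obtain p' ps'' where ps': "ps' = p' # ps''" "p' \<in> alg j'"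
    by (cases ps') auto
  have "supported_below j (foldr (\<circ>) ps' id vacuum)"
    using supported_below_mono[OF alg_supported_below[OF ps'(2)], of j] j' ps'(1) by simp
  then have "omega (foldr (\<circ>) ps id) = omega p * omega (foldr (\<circ>) ps' id)"
    unfolding ps omega_def[of "foldr (\<circ>) (p # ps') id"] omega_def[of "foldr (\<circ>) ps' id"]
      foldr_comp_Cons_apply
    by (rule alg_apply_vacuum_coeff[OF p(2,1)])
  also have "\<dots> = (\<Prod>q\<leftarrow>ps. omega q)"
  proof -
    have "k < length (j' # js')" "sorted_wrt (>) (take (Suc k) (j' # js'))"
      "sorted_wrt (<) (drop k (j' # js'))"
      using Suc.prems(2-4) js by auto
    then have "omega (foldr (\<circ>) ps' id) = (\<Prod>q\<leftarrow>ps'. omega q)"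
      by (rule Suc.IH[OF tail])
    then show ?thesis
      unfolding ps by simp
  qed
  finally show ?case .
qed

lemma prod_lessThan_length_nth: "(\<Prod>m<length xs. f (xs ! m)) = (\<Prod>x\<leftarrow>xs. f x)"
  by (induction xs) (simp_all only: length_Cons prod.lessThan_Suc_shift, simp_all)

theorem theorem2p2:
  shows
   "(\<forall>i j k pi pj pk. 1 \<le> i \<and> 1 \<le> k \<and> i < j \<and> k < j \<and>
        pi \<in> alg i \<and> pj \<in> alg j \<and> pk \<in> alg k \<longrightarrow>
        (\<forall>f\<in>fock0. pi (pj (pk f)) = (\<lambda>w. omega pj * pi (pk f) w)))
    \<and>
    (\<forall>(js :: nat list) (ps :: op list) (k :: nat).
        length ps = length js \<and> k < length js \<and> (\<forall>m<length js. 1 \<le> js ! m) \<and>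
        (\<forall>m. m < k \<longrightarrow> js ! m > js ! (m + 1)) \<and>
        (\<forall>m. k \<le> m \<and> m + 1 < length js \<longrightarrow> js ! m < js ! (m + 1)) \<and>
        (\<forall>m<length js. ps ! m \<in> alg (js ! m)) \<longrightarrow>
        omega (foldr (\<circ>) ps id) = (\<Prod>m<length js. omega (ps ! m)))"
proof (intro conjI allI impI ballI)
  fix i j k pi pj pk f
  assume "1 \<le> i \<and> 1 \<le> k \<and> i < j \<and> k < j \<and> pi \<in> alg i \<and> pj \<in> alg j \<and> pk \<in> alg k"
  then show "pi (pj (pk f)) = (\<lambda>w. omega pj * pi (pk f) w)"
    by (meson alg_factor_omega alg_supported_below supported_below_mono Suc_leI)
next
  fix js ps k
  assume valley: "length ps = length js \<and> k < length js \<and> (\<forall>m<length js. 1 \<le> js ! m) \<and>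
        (\<forall>m. m < k \<longrightarrow> js ! m > js ! (m + 1)) \<and>
        (\<forall>m. k \<le> m \<and> m + 1 < length js \<longrightarrow> js ! m < js ! (m + 1)) \<and>
        (\<forall>m<length js. ps ! m \<in> alg (js ! m))"
  then have "list_all2 (\<lambda>p j. 1 \<le> j \<and> p \<in> alg j) ps js"
    by (simp add: list_all2_conv_all_nth)
  moreover have "sorted_wrt (>) (take (Suc k) js)" "sorted_wrt (<) (drop k js)"
    using valley by (auto simp: sorted_wrt_iff_nth_Suc_transp)
  ultimately have "omega (foldr (\<circ>) ps id) = (\<Prod>p\<leftarrow>ps. omega p)"
    using valley by (intro omega_foldr_valley) auto
  also have "\<dots> = (\<Prod>m<length js. omega (ps ! m))"
    using valley prod_lessThan_length_nth[of omega ps] by simp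
  finally show "omega (foldr (\<circ>) ps id) = (\<Prod>m<length js. omega (ps ! m))" .
qed

end
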